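(* Let $p$ be an odd prime and $\sim$ an equivalence relation on $\mathbb{Z}_p^\times$ such that $x \sim y$ and $x \neq y$ together imply $(-x) \sim (y-x)$. Let $S_1$ and $S_2$ each be obtained by adjoining $0$ to some equivalence class of $\sim$. Then either $S_1, S_2$ form a distinct difference system, or there exist $a \in S_1$ and $b \in S_2$ such that $\{x - a \mid x \in S_1\} = \{y - b \mid y \in S_2\}$.
   Context: Subsets $S_1,\ldots,S_k$ of an abelian group $A$ form a distinct difference system if: (i) for any $i,j$ and any $x,y \in S_i$, $z,w \in S_j$ with $x \neq y$ and $z \neq w$, the equation $x-y=z-w$ implies $x=z$ and $y=w$; (ii) each $S_i$ contains $0$ and at least one other element; (iii) $S_i \cap S_j = \{0\}$ for $i \neq j$. *)

theory Defs
  imports Main "HOL-Computational_Algebra.Primes"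
begin

text \<open>The group Z_p is represented by the integers 0..p-1 with arithmetic mod p;
  Z_p^* (the units) is {1..p-1}.\<close>

definition Zp :: "int \<Rightarrow> int set" where
  "Zp p = {0..<p}"

definition Zp_units :: "int \<Rightarrow> int set" where
  "Zp_units p = {1..<p}"

definition dds_mod :: "int \<Rightarrow> int set list \<Rightarrow> bool" where
  "dds_mod p Ss \<longleftrightarrow>
     (\<forall>i<length Ss. Ss ! i \<subseteq> Zp p) \<and>
     (\<forall>i<length Ss. \<forall>j<length Ss. \<forall>x\<in>Ss ! i. \<forall>y\<in>Ss ! i. \<forall>z\<in>Ss ! j. \<forall>w\<in>Ss ! j.
        x \<noteq> y \<and> z \<noteq> w \<and> (x - y) mod p = (z - w) mod p \<longrightarrow> x = z \<and> y = w) \<and>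
     (\<forall>i<length Ss. 0 \<in> Ss ! i \<and> (\<exists>x\<in>Ss ! i. x \<noteq> 0)) \<and>
     (\<forall>i<length Ss. \<forall>j<length Ss. i \<noteq> j \<longrightarrow> Ss ! i \<inter> Ss ! j = {0})"

end

theory Submission
  imports Defs "HOL-Number_Theory.Cong"
begin

text \<open>For x in a class C, the hypothesis on the relation says exactly that the translate
  (insert 0 C) - x lies in the block insert 0 [-x]; applying the same to -x and comparing sizes
  shows that the two are equal. So every translate of a block through one of its points is again
  a block, namely insert 0 [d] for any nonzero d it contains. Consequently a coincidence
  x - y = z - w of nonzero differences taken in blocks S and S' forces S - y = S' - w. Inside a
  single block with y \<noteq> w this makes the block invariant under a nonzero translation, hence equal
  to all of Z_p, which is impossible as soon as there are two different classes.\<close>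

lemma in_quotient_eq_Image:
  assumes "equiv A r" and "X \<in> A // r" and "x \<in> X"
  shows "X = r `` {x}"
proof -
  obtain a where X: "X = r `` {a}"
    using assms(2) by (rule quotientE)
  then have "(a, x) \<in> r"
    using assms(3) by simp
  then show ?thesis
    using X equiv_class_eq[OF assms(1)] by simp
qed

lemma mod_diff_right_cancel:
  fixes a b c p :: int
  shows "(a - c) mod p = (b - c) mod p \<longleftrightarrow> a mod p = b mod p"
  using cong_add_rcancel[of "a - c" c "b - c" p] unfolding cong_def by simp

lemma Zp_units_eq_Zp_minus_0: "Zp_units p = Zp p - {0}"
  by (auto simp: Zp_def Zp_units_def)

lemma mod_Zp: "a \<in> Zp p \<Longrightarrow> a mod p = a"
  by (simp add: Zp_def)

lemma Zp_mod_eq_iff: "a \<in> Zp p \<Longrightarrow> b \<in> Zp p \<Longrightarrow> a mod p = b mod p \<longleftrightarrow> a = b"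
  by (simp add: Zp_def)

lemma neg_mod_unit: "x \<in> Zp_units p \<Longrightarrow> (- x) mod p \<in> Zp_units p"
  by (simp add: Zp_units_def zmod_zminus1_eq_if)

lemma neg_neg_mod_unit: "x \<in> Zp_units p \<Longrightarrow> (- ((- x) mod p)) mod p = x"
  by (simp add: Zp_units_def mod_minus_eq)

lemma inj_on_translate_mod: "inj_on (\<lambda>y. (y - x) mod p) (Zp p)"
  by (rule inj_onI) (simp add: mod_diff_right_cancel Zp_mod_eq_iff)

lemma shift_closed_eq_Zp:
  fixes p t :: int
  assumes "prime p" and "\<not> p dvd t" and "S \<subseteq> Zp p" and "0 \<in> S"
    and closed: "\<And>s. s \<in> S \<Longrightarrow> (s - t) mod p \<in> S"
  shows "S = Zp p"
proof
  have multiple: "(- (int k * t)) mod p \<in> S" for k :: nat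
  proof (induction k)
    case 0
    then show ?case using \<open>0 \<in> S\<close> by simp
  next
    case (Suc k)
    have "- (int (Suc k) * t) = - (int k * t) - t"
      by (simp add: algebra_simps)
    then have "((- (int k * t)) mod p - t) mod p = (- (int (Suc k) * t)) mod p"
      by (simp add: mod_diff_left_eq)
    then show ?case using closed[OF Suc] by simp
  qed
  have "coprime t p"
    using assms(1,2) prime_imp_coprime coprime_commute by blast
  then obtain v where v: "[t * v = 1] (mod p)"
    using cong_solve_coprime_int by blast
  show "Zp p \<subseteq> S"
  proof
    fix u assume u: "u \<in> Zp p"
    define k where "k = nat ((- u * v) mod p)"
    have "[int k = - u * v] (mod p)"
      using prime_gt_0_int[OF assms(1)] by (simp add: k_def cong_def)
    then have "[- (int k * t) = - (- u * v * t)] (mod p)"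
      by (simp only: cong_minus_minus_iff cong_mult cong_refl)
    also have "- (- u * v * t) = u * (t * v)"
      by (simp add: algebra_simps)
    also have "[u * (t * v) = u * 1] (mod p)"
      using v by (rule cong_mult[OF cong_refl])
    finally have "(- (int k * t)) mod p = u"
      using u by (simp add: cong_def Zp_def)
    then show "u \<in> S"
      using multiple[of k] by simp
  qed
qed (rule assms)

lemma equal_translates_eq_Zp:
  fixes p y w :: int
  assumes "prime p" and "S \<subseteq> Zp p" and "0 \<in> S" and "y \<in> S" and "w \<in> S" and "y \<noteq> w"
    and translates: "(\<lambda>z. (z - y) mod p) ` S = (\<lambda>z. (z - w) mod p) ` S"
  shows "S = Zp p"
proof (rule shift_closed_eq_Zp[OF assms(1) _ assms(2,3)])
  have "y mod p \<noteq> w mod p"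
    using assms(2,4-6) Zp_mod_eq_iff by blast
  then show "\<not> p dvd (y - w)"
    by (simp add: mod_eq_dvd_iff)
  fix s assume "s \<in> S"
  then obtain s' where s': "s' \<in> S" "(s - y) mod p = (s' - w) mod p"
    using translates by blast
  then have "(s - (y - w) - w) mod p = (s' - w) mod p"
    by simp
  then have "(s - (y - w)) mod p = s' mod p"
    by (simp only: mod_diff_right_cancel)
  also have "s' mod p = s'"
    using s' assms(2) mod_Zp by blast
  finally show "(s - (y - w)) mod p \<in> S"
    using s' by simp
qed

definition distinct_diffs_mod :: "int \<Rightarrow> int set \<Rightarrow> int set \<Rightarrow> bool" where
  "distinct_diffs_mod p A B \<longleftrightarrow>
     (\<forall>x\<in>A. \<forall>y\<in>A. \<forall>z\<in>B. \<forall>w\<in>B.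
        x \<noteq> y \<and> z \<noteq> w \<and> (x - y) mod p = (z - w) mod p \<longrightarrow> x = z \<and> y = w)"

lemma all_less_length_pair: "(\<forall>i<length [A, B]. P i) \<longleftrightarrow> P 0 \<and> P (Suc 0)"
  by (auto simp: less_Suc_eq)

lemma dds_mod_pairI:
  assumes "A \<subseteq> Zp p" and "B \<subseteq> Zp p"
    and "distinct_diffs_mod p A A" and "distinct_diffs_mod p A B"
    and "distinct_diffs_mod p B A" and "distinct_diffs_mod p B B"
    and "0 \<in> A" and "0 \<in> B" and "\<exists>x\<in>A. x \<noteq> 0" and "\<exists>x\<in>B. x \<noteq> 0"
    and "A \<inter> B = {0}"
  shows "dds_mod p [A, B]"
  unfolding dds_mod_def distinct_diffs_mod_def[symmetric] all_less_length_pair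
    nth_Cons_0 nth_Cons_Suc
  using assms by (simp add: Int_commute)

locale translation_compatible =
  fixes p :: int and r :: "(int \<times> int) set"
  assumes prime: "prime p"
    and equiv: "equiv (Zp_units p) r"
    and neg_shift: "\<And>x y. (x, y) \<in> r \<Longrightarrow> x \<noteq> y \<Longrightarrow> ((- x) mod p, (y - x) mod p) \<in> r"
begin

lemma class_subset_units: "C \<in> Zp_units p // r \<Longrightarrow> C \<subseteq> Zp_units p"
  using in_quotient_imp_subset[OF equiv] .

lemma zero_notin_class: "C \<in> Zp_units p // r \<Longrightarrow> 0 \<notin> C"
  using class_subset_units by (fastforce simp: Zp_units_eq_Zp_minus_0)

lemma block_subset_Zp:
  assumes "C \<in> Zp_units p // r"
  shows "insert 0 C \<subseteq> Zp p"
  using class_subset_units[OF assms] prime_gt_0_int[OF prime] by (auto simp: Zp_def Zp_units_def)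

lemma finite_block: "C \<in> Zp_units p // r \<Longrightarrow> finite (insert 0 C)"
  using block_subset_Zp finite_subset by (fastforce simp: Zp_def)

lemma class_of_neg_in_quotient: "x \<in> Zp_units p \<Longrightarrow> r `` {(- x) mod p} \<in> Zp_units p // r"
  using neg_mod_unit by (rule quotientI)

lemma translate_block_subset:
  assumes C: "C \<in> Zp_units p // r" and "x \<in> C"
  shows "(\<lambda>y. (y - x) mod p) ` insert 0 C \<subseteq> insert 0 (r `` {(- x) mod p})"
proof
  fix z assume "z \<in> (\<lambda>y. (y - x) mod p) ` insert 0 C"
  then obtain y where y: "y \<in> insert 0 C" and z: "z = (y - x) mod p" by blast
  have x_unit: "x \<in> Zp_units p"
    using class_subset_units[OF C] \<open>x \<in> C\<close> by blast
  consider "y = x" | "y = 0" | "y \<in> C" "y \<noteq> x"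
    using y by blast
  then show "z \<in> insert 0 (r `` {(- x) mod p})"
  proof cases
    case 1
    then show ?thesis using z by simp
  next
    case 2
    then show ?thesis using z equiv_class_self[OF equiv neg_mod_unit[OF x_unit]] by simp
  next
    case 3
    then have "(x, y) \<in> r"
      using in_quotient_eq_Image[OF equiv C \<open>x \<in> C\<close>] by simp
    then show ?thesis using neg_shift \<open>y \<noteq> x\<close> z by simp
  qed
qed

lemma card_block_le:
  assumes C: "C \<in> Zp_units p // r" and "x \<in> C"
  shows "card (insert 0 C) \<le> card (insert 0 (r `` {(- x) mod p}))"
proof -
  have "x \<in> Zp_units p"
    using class_subset_units[OF C] \<open>x \<in> C\<close> by blast
  have "card (insert 0 C) = card ((\<lambda>y. (y - x) mod p) ` insert 0 C)"
    using card_image[OF inj_on_subset[OF inj_on_translate_mod block_subset_Zp[OF C]]] by simp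
  also have "\<dots> \<le> card (insert 0 (r `` {(- x) mod p}))"
    using finite_block[OF class_of_neg_in_quotient[OF \<open>x \<in> Zp_units p\<close>]]
    by (rule card_mono) (rule translate_block_subset[OF assms])
  finally show ?thesis .
qed

lemma translate_block:
  assumes C: "C \<in> Zp_units p // r" and "x \<in> C"
  shows "(\<lambda>y. (y - x) mod p) ` insert 0 C = insert 0 (r `` {(- x) mod p})"
proof -
  have x_unit: "x \<in> Zp_units p"
    using class_subset_units[OF C] \<open>x \<in> C\<close> by blast
  let ?D = "r `` {(- x) mod p}"
  have D: "?D \<in> Zp_units p // r"
    using class_of_neg_in_quotient[OF x_unit] .
  have "card (insert 0 ?D) \<le> card (insert 0 (r `` {(- ((- x) mod p)) mod p}))"
    using card_block_le[OF D equiv_class_self[OF equiv neg_mod_unit[OF x_unit]]] .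
  also have "r `` {(- ((- x) mod p)) mod p} = C"
    using neg_neg_mod_unit[OF x_unit] in_quotient_eq_Image[OF equiv C \<open>x \<in> C\<close>] by simp
  also have "card (insert 0 C) = card ((\<lambda>y. (y - x) mod p) ` insert 0 C)"
    using card_image[OF inj_on_subset[OF inj_on_translate_mod block_subset_Zp[OF C]]] by simp
  finally have "card (insert 0 ?D) \<le> card ((\<lambda>y. (y - x) mod p) ` insert 0 C)" .
  then show ?thesis
    by (rule card_seteq[OF finite_block[OF D] translate_block_subset[OF assms]])
qed

lemma translate_block_eq_block:
  assumes C: "C \<in> Zp_units p // r" and "y \<in> insert 0 C"
    and d: "d \<in> (\<lambda>z. (z - y) mod p) ` insert 0 C" and "d \<noteq> 0"
  shows "(\<lambda>z. (z - y) mod p) ` insert 0 C = insert 0 (r `` {d})"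
proof (cases "y = 0")
  case True
  have "(\<lambda>z. (z - y) mod p) ` insert 0 C = insert 0 C"
    using block_subset_Zp[OF C] True by (force simp: Zp_def)
  then show ?thesis
    using d \<open>d \<noteq> 0\<close> in_quotient_eq_Image[OF equiv C] by simp
next
  case False
  then have "y \<in> C" using \<open>y \<in> insert 0 C\<close> by simp
  then have "y \<in> Zp_units p" using class_subset_units[OF C] by blast
  have D: "r `` {(- y) mod p} \<in> Zp_units p // r"
    using class_of_neg_in_quotient[OF \<open>y \<in> Zp_units p\<close>] .
  have translate: "(\<lambda>z. (z - y) mod p) ` insert 0 C = insert 0 (r `` {(- y) mod p})"
    using translate_block[OF C \<open>y \<in> C\<close>] .
  then have "d \<in> r `` {(- y) mod p}"
    using d \<open>d \<noteq> 0\<close> by simp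
  then show ?thesis
    using translate in_quotient_eq_Image[OF equiv D] by simp
qed

lemma translates_eq_if_diffs_eq:
  assumes C: "C \<in> Zp_units p // r" and C': "C' \<in> Zp_units p // r"
    and "x \<in> insert 0 C" "y \<in> insert 0 C" "z \<in> insert 0 C'" "w \<in> insert 0 C'"
    and "x \<noteq> y" and diffs: "(x - y) mod p = (z - w) mod p"
  shows "(\<lambda>u. (u - y) mod p) ` insert 0 C = (\<lambda>u. (u - w) mod p) ` insert 0 C'"
proof -
  define d where "d = (x - y) mod p"
  have "x mod p \<noteq> y mod p"
    using assms(3,4,7) block_subset_Zp[OF C] Zp_mod_eq_iff by blast
  then have "d \<noteq> 0"
    by (simp add: d_def mod_eq_dvd_iff dvd_eq_mod_eq_0)
  moreover have "d \<in> (\<lambda>u. (u - y) mod p) ` insert 0 C"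
    using \<open>x \<in> insert 0 C\<close> d_def by blast
  moreover have "d \<in> (\<lambda>u. (u - w) mod p) ` insert 0 C'"
    using \<open>z \<in> insert 0 C'\<close> d_def diffs by blast
  ultimately show ?thesis
    using translate_block_eq_block[OF C \<open>y \<in> insert 0 C\<close>]
      translate_block_eq_block[OF C' \<open>w \<in> insert 0 C'\<close>] by simp
qed

lemma distinct_diffs_block:
  assumes C: "C \<in> Zp_units p // r" and "C \<noteq> Zp_units p"
  shows "distinct_diffs_mod p (insert 0 C) (insert 0 C)"
  unfolding distinct_diffs_mod_def
proof (intro ballI impI)
  fix x y z w
  assume block: "x \<in> insert 0 C" "y \<in> insert 0 C" "z \<in> insert 0 C" "w \<in> insert 0 C"
    and "x \<noteq> y \<and> z \<noteq> w \<and> (x - y) mod p = (z - w) mod p"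
  then have "x \<noteq> y" and diffs: "(x - y) mod p = (z - w) mod p" by auto
  have "y = w"
  proof (rule ccontr)
    assume "y \<noteq> w"
    have "insert 0 C = Zp p"
      using equal_translates_eq_Zp[OF prime block_subset_Zp[OF C] insertI1 block(2,4) \<open>y \<noteq> w\<close>]
        translates_eq_if_diffs_eq[OF C C block \<open>x \<noteq> y\<close> diffs] .
    then have "C = Zp_units p"
      using zero_notin_class[OF C] by (auto simp: Zp_units_eq_Zp_minus_0)
    with \<open>C \<noteq> Zp_units p\<close> show False by contradiction
  qed
  then have "x mod p = z mod p"
    using diffs by (simp add: mod_diff_right_cancel)
  then show "x = z \<and> y = w"
    using block(1,3) block_subset_Zp[OF C] Zp_mod_eq_iff \<open>y = w\<close> by blast
qed

lemma distinct_diffs_blocks: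
  assumes C: "C \<in> Zp_units p // r" and C': "C' \<in> Zp_units p // r"
    and no_common_translate: "\<forall>a\<in>insert 0 C. \<forall>b\<in>insert 0 C'.
      (\<lambda>u. (u - a) mod p) ` insert 0 C \<noteq> (\<lambda>u. (u - b) mod p) ` insert 0 C'"
  shows "distinct_diffs_mod p (insert 0 C) (insert 0 C')"
  unfolding distinct_diffs_mod_def
proof (intro ballI impI)
  fix x y z w
  assume blocks: "x \<in> insert 0 C" "y \<in> insert 0 C" "z \<in> insert 0 C'" "w \<in> insert 0 C'"
    and "x \<noteq> y \<and> z \<noteq> w \<and> (x - y) mod p = (z - w) mod p"
  then have "(\<lambda>u. (u - y) mod p) ` insert 0 C = (\<lambda>u. (u - w) mod p) ` insert 0 C'"
    using translates_eq_if_diffs_eq[OF C C' blocks] by simp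
  with no_common_translate blocks(2,4) show "x = z \<and> y = w"
    by blast
qed

lemma class_ne_units:
  assumes C: "C \<in> Zp_units p // r" and C': "C' \<in> Zp_units p // r" and "C \<noteq> C'"
  shows "C \<noteq> Zp_units p"
proof
  assume "C = Zp_units p"
  obtain c where "c \<in> C'"
    using in_quotient_imp_non_empty[OF equiv C'] by blast
  then have "c \<in> C \<inter> C'"
    using class_subset_units[OF C'] \<open>C = Zp_units p\<close> by blast
  then show False
    using quotient_disj[OF equiv C C'] \<open>C \<noteq> C'\<close> by blast
qed

lemma class_has_nonzero:
  assumes "C \<in> Zp_units p // r"
  shows "\<exists>x\<in>C. x \<noteq> 0"
proof -
  obtain c where "c \<in> C"
    using in_quotient_imp_non_empty[OF equiv assms] by blast
  moreover have "c \<noteq> 0"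
    using zero_notin_class[OF assms] \<open>c \<in> C\<close> by blast
  ultimately show ?thesis ..
qed

end

theorem lemma3p27:
  fixes p :: int and r :: "(int \<times> int) set" and C1 C2 :: "int set"
  assumes "prime p" and "odd p"
    and "equiv (Zp_units p) r"
    and "\<And>x y. (x, y) \<in> r \<Longrightarrow> x \<noteq> y \<Longrightarrow> ((- x) mod p, (y - x) mod p) \<in> r"
    and "C1 \<in> Zp_units p // r" and "C2 \<in> Zp_units p // r"
  shows "dds_mod p [insert 0 C1, insert 0 C2] \<or>
         (\<exists>a\<in>insert 0 C1. \<exists>b\<in>insert 0 C2.
            (\<lambda>x. (x - a) mod p) ` insert 0 C1 = (\<lambda>y. (y - b) mod p) ` insert 0 C2)"
proof (cases "C1 = C2")
  case True
  then show ?thesis by blast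
next
  case False
  interpret translation_compatible p r
    using assms by unfold_locales auto
  note C1 = \<open>C1 \<in> Zp_units p // r\<close> and C2 = \<open>C2 \<in> Zp_units p // r\<close>
  show ?thesis
  proof (rule disjCI)
    assume "\<not> (\<exists>a\<in>insert 0 C1. \<exists>b\<in>insert 0 C2.
      (\<lambda>x. (x - a) mod p) ` insert 0 C1 = (\<lambda>y. (y - b) mod p) ` insert 0 C2)"
    then have "distinct_diffs_mod p (insert 0 C1) (insert 0 C2)"
      and "distinct_diffs_mod p (insert 0 C2) (insert 0 C1)"
      using distinct_diffs_blocks[OF C1 C2] distinct_diffs_blocks[OF C2 C1] by metis+
    moreover have "distinct_diffs_mod p (insert 0 C1) (insert 0 C1)"
      and "distinct_diffs_mod p (insert 0 C2) (insert 0 C2)"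
      using distinct_diffs_block[OF C1 class_ne_units[OF C1 C2 False]]
        distinct_diffs_block[OF C2 class_ne_units[OF C2 C1]] False by auto
    moreover have "insert 0 C1 \<inter> insert 0 C2 = {0}"
      using quotient_disj[OF equiv C1 C2] False by auto
    ultimately show "dds_mod p [insert 0 C1, insert 0 C2]"
      using block_subset_Zp[OF C1] block_subset_Zp[OF C2] class_has_nonzero[OF C1]
        class_has_nonzero[OF C2]
      by (intro dds_mod_pairI) auto
  qed
qed

end
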